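(* Let $U=U^{(1)}\otimes\cdots\otimes U^{(x)}$ be a Kronecker product of $x\ge1$ unitary $2\times2$ matrices with nonzero entries, so $U$ has size $N=2^x$. Then $\mathcal I_U$ has only the two eigenspaces $\mathbb V_U(1)$ and $\mathbb V_U(-1)$, with $\mathbb C^{N\times N}=\mathbb V_U(1)\oplus\mathbb V_U(-1)$ orthogonal with respect to $\langle\cdot,\cdot\rangle_U$. An eigenbasis of $\mathcal I_U$ orthonormal with respect to $\langle\cdot,\cdot\rangle_U$ is formed by the Kronecker products $G^{(1)}\otimes\cdots\otimes G^{(x)}$, where each $G^{(k)}$ is one of the four matrices $$i\begin{pmatrix}1&1\\0&0\end{pmatrix},\ i\begin{pmatrix}0&0\\1&1\end{pmatrix},\ \tfrac{i}{\sqrt2|a_k||b_k|}\begin{pmatrix}|b_k|^2&-|a_k|^2\\|a_k|^2&-|b_k|^2\end{pmatrix}\ (\text{eigenvalue }1\text{ of }\mathcal I_{U^{(k)}}),\quad \tfrac{i|a_k||b_k|}{\sqrt2}\begin{pmatrix}1/|a_k|^2&-1/|b_k|^2\\-1/|b_k|^2&1/|a_k|^2\end{pmatrix}\ (\text{eigenvalue }-1),$$ with $(a_k,b_k)$ the first row of $U^{(k)}$; the eigenvalue of such a product is the product of the eigenvalues $\lambda_{G^{(k)}}$. The multiplicity of $1$ in the spectrum of $\mathcal I_U$ equals the number of sequences $(\lambda_{G^{(1)}},\dots,\lambda_{G^{(x)}})$ with an even number of $-1$'s, and this multiplicity (i.e. $\mathbf D(U)$) equals $2^x(2^x+1)/2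$.
   Context: For unitary $W$ with no zero entries: $\mathcal C_W(F)=(F\circ W)W^*$, $\mathcal D_W(F)=W(\overline F\circ W)^*$ ($\circ$ entrywise product), $\mathcal I_W=\mathcal C_W^{-1}\mathcal D_W$ on $\mathbb C^{N\times N}$; $\mathbb V_W(\lambda)$ is the eigenspace of $\mathcal I_W$ for $\lambda$. $\langle F,G\rangle_W=\sum_{i,j}|W_{i,j}|^2F_{i,j}\overline{G_{i,j}}$. $\mathbf D(W)=\dim_{\mathbb R}\{iR\circ W:\ R\text{ real},\ (iR\circ W)W^*\text{ antihermitian}\}$, which equals the multiplicity of $1$ in the spectrum of $\mathcal I_W$. *)

theory Defs
  imports Complex_Main "HOL-Library.Function_Algebras"
begin

text \<open>Square complex matrices are represented as functions nat => nat => complex;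
  an N x N matrix is one whose entries vanish outside the index range below N.
  Addition / zero / negation are the pointwise ones from Function_Algebras.\<close>

type_synonym cmat = "nat \<Rightarrow> nat \<Rightarrow> complex"

definition mspace :: "nat \<Rightarrow> cmat set" where
  "mspace N = {F. \<forall>i j. (N \<le> i \<or> N \<le> j) \<longrightarrow> F i j = 0}"

definition mmult :: "nat \<Rightarrow> cmat \<Rightarrow> cmat \<Rightarrow> cmat" where
  "mmult N A B = (\<lambda>i j. if i < N \<and> j < N then (\<Sum>k<N. A i k * B k j) else 0)"

definition adj :: "cmat \<Rightarrow> cmat" where
  "adj A = (\<lambda>i j. cnj (A j i))"

definition mconj :: "cmat \<Rightarrow> cmat" where
  "mconj A = (\<lambda>i j. cnj (A i j))"

definition hadamard :: "cmat \<Rightarrow> cmat \<Rightarrow> cmat" where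
  "hadamard A B = (\<lambda>i j. A i j * B i j)"

definition ident :: "nat \<Rightarrow> cmat" where
  "ident N = (\<lambda>i j. if i = j \<and> i < N then 1 else 0)"

definition cscale :: "complex \<Rightarrow> cmat \<Rightarrow> cmat" where
  "cscale c F = (\<lambda>i j. c * F i j)"

definition rscale :: "real \<Rightarrow> cmat \<Rightarrow> cmat" where
  "rscale r F = (\<lambda>i j. complex_of_real r * F i j)"

definition unitary_mat :: "nat \<Rightarrow> cmat \<Rightarrow> bool" where
  "unitary_mat N W \<longleftrightarrow> W \<in> mspace N \<and> mmult N W (adj W) = ident N \<and> mmult N (adj W) W = ident N"

definition no_zero_entries :: "nat \<Rightarrow> cmat \<Rightarrow> bool" where
  "no_zero_entries N W \<longleftrightarrow> (\<forall>i<N. \<forall>j<N. W i j \<noteq> 0)"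

definition C_op :: "nat \<Rightarrow> cmat \<Rightarrow> cmat \<Rightarrow> cmat" where
  "C_op N W F = mmult N (hadamard F W) (adj W)"

definition D_op :: "nat \<Rightarrow> cmat \<Rightarrow> cmat \<Rightarrow> cmat" where
  "D_op N W F = mmult N W (adj (hadamard (mconj F) W))"

definition I_op :: "nat \<Rightarrow> cmat \<Rightarrow> cmat \<Rightarrow> cmat" where
  "I_op N W F = (THE G. G \<in> mspace N \<and> C_op N W G = D_op N W F)"

definition eigsp :: "nat \<Rightarrow> cmat \<Rightarrow> complex \<Rightarrow> cmat set" where
  "eigsp N W lam = {F \<in> mspace N. I_op N W F = cscale lam F}"

definition ipW :: "nat \<Rightarrow> cmat \<Rightarrow> cmat \<Rightarrow> cmat \<Rightarrow> complex" where
  "ipW N W F G = (\<Sum>i<N. \<Sum>j<N. complex_of_real ((cmod (W i j))\<^sup>2) * F i j * cnj (G i j))"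

definition Dset :: "nat \<Rightarrow> cmat \<Rightarrow> cmat set" where
  "Dset N W = {hadamard (\<lambda>i j. \<i> * complex_of_real (R i j)) W | R :: nat \<Rightarrow> nat \<Rightarrow> real.
      adj (mmult N (hadamard (\<lambda>i j. \<i> * complex_of_real (R i j)) W) (adj W))
      = - mmult N (hadamard (\<lambda>i j. \<i> * complex_of_real (R i j)) W) (adj W)}"

definition Dnum :: "nat \<Rightarrow> cmat \<Rightarrow> nat" where
  "Dnum N W = vector_space.dim rscale (Dset N W)"

definition kron :: "nat \<Rightarrow> cmat \<Rightarrow> nat \<Rightarrow> cmat \<Rightarrow> cmat" where
  "kron n A m B = (\<lambda>i j. if i < n * m \<and> j < n * m
      then A (i div m) (j div m) * B (i mod m) (j mod m) else 0)"

fun kron_list :: "cmat list \<Rightarrow> cmat" where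
  "kron_list [] = (\<lambda>i j. if i = 0 \<and> j = 0 then 1 else 0)"
| "kron_list (A # As) = kron 2 A (2 ^ length As) (kron_list As)"

definition mat2 :: "complex \<Rightarrow> complex \<Rightarrow> complex \<Rightarrow> complex \<Rightarrow> cmat" where
  "mat2 p q r s = (\<lambda>i j. if i = 0 \<and> j = 0 then p else if i = 0 \<and> j = 1 then q
      else if i = 1 \<and> j = 0 then r else if i = 1 \<and> j = 1 then s else 0)"

text \<open>The four 2 x 2 basis matrices attached to a 2 x 2 unitary V with first row (a, b),
  indexed by t = 0,1,2,3 (in the order of the paper).\<close>

definition Gmat :: "cmat \<Rightarrow> nat \<Rightarrow> cmat" where
  "Gmat V t = (let a = cmod (V 0 0); b = cmod (V 0 1) in
     if t = 0 then cscale \<i> (mat2 1 1 0 0)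
     else if t = 1 then cscale \<i> (mat2 0 0 1 1)
     else if t = 2 then cscale (\<i> / complex_of_real (sqrt 2 * a * b))
        (mat2 (complex_of_real (b\<^sup>2)) (- complex_of_real (a\<^sup>2)) (complex_of_real (a\<^sup>2)) (- complex_of_real (b\<^sup>2)))
     else cscale (\<i> * complex_of_real (a * b / sqrt 2))
        (mat2 (complex_of_real (1 / a\<^sup>2)) (- complex_of_real (1 / b\<^sup>2)) (- complex_of_real (1 / b\<^sup>2)) (complex_of_real (1 / a\<^sup>2))))"

definition lamG :: "nat \<Rightarrow> complex" where
  "lamG t = (if t = 3 then -1 else 1)"

definition choices :: "nat \<Rightarrow> nat list set" where
  "choices x = {s. length s = x \<and> set s \<subseteq> {0..<4}}"

definition Gprod :: "cmat list \<Rightarrow> nat list \<Rightarrow> cmat" where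
  "Gprod Us s = kron_list (map2 Gmat Us s)"

end

theory Submission
  imports Defs
begin

text \<open>
  For \<open>W\<close> unitary with nonzero entries, \<open>I_W F = (D_W(F) W) \<oslash> W\<close>, and both this formula and
  \<open>\<langle>\<cdot>,\<cdot>\<rangle>_W\<close> are multiplicative under Kronecker products. For a single \<open>2 \<times> 2\<close> factor the four
  matrices \<open>G\<close> are checked by direct computation to be \<open>\<langle>\<cdot>,\<cdot>\<rangle>_V\<close>-orthonormal eigenvectors of
  \<open>I_V\<close> with eigenvalues \<open>1, 1, 1, -1\<close>. Hence the \<open>4\<^sup>x = N\<^sup>2\<close> Kronecker products are orthonormal
  eigenvectors of \<open>I_U\<close>, i.e. an eigenbasis, whose eigenvalue is \<open>\<plusminus>1\<close> according to the parity of
  the number of factors with eigenvalue \<open>-1\<close>; all spectral statements follow by expanding in this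
  basis, and an even number of \<open>-1\<close>'s occurs in \<open>(4\<^sup>x + 2\<^sup>x)/2\<close> of the index sequences.
  For \<open>\<^bold>D(U)\<close>: a purely imaginary \<open>Y\<close> has \<open>(Y \<circ> U) U\<^sup>*\<close> antihermitian iff \<open>I_U Y = Y\<close>, and after
  a common phase the basis vectors of \<open>\<bbbV>_U(1)\<close> become purely imaginary, so they also form a real
  basis of the imaginary part of \<open>\<bbbV>_U(1)\<close>, which is mapped injectively onto the set defining
  \<open>\<^bold>D(U)\<close> by \<open>Y \<mapsto> Y \<circ> U\<close>.
\<close>

lemma sum_apply2: "(sum f A) i j = (\<Sum>a\<in>A. f a i j)"
  by (induction A rule: infinite_finite_induct) auto

lemma sum_lessThan_mult_nat:
  fixes n m :: nat
  shows "(\<Sum>k<n*m. g k) = (\<Sum>a<n. \<Sum>b<m. g (a*m+b))"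
proof -
  have "(\<Sum>k\<in>{a*m..<a*m+m}. g k) = (\<Sum>b<m. g (a*m+b))" for a
    using sum.shift_bounds_nat_ivl[of g 0 "a*m" m] by (simp add: atLeast0LessThan add.commute)
  then show ?thesis by (simp add: sum.nat_group[symmetric])
qed

interpretation cvs: vector_space cscale
  by unfold_locales (auto simp: cscale_def fun_eq_iff algebra_simps)

interpretation rvs: vector_space rscale
  by unfold_locales (auto simp: rscale_def fun_eq_iff algebra_simps)

lemma rscale_eq_cscale: "rscale r F = cscale (complex_of_real r) F"
  by (simp add: rscale_def cscale_def)

lemma subspace_mspace: "cvs.subspace (mspace N)"
  by (auto simp: cvs.subspace_def mspace_def cscale_def)

lemma ipW_add_left: "ipW N W (F + F') G = ipW N W F G + ipW N W F' G"
  by (simp add: ipW_def algebra_simps sum.distrib)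

lemma ipW_diff_left: "ipW N W (F - F') G = ipW N W F G - ipW N W F' G"
  by (simp add: ipW_def algebra_simps sum_subtractf)

lemma ipW_cscale_left: "ipW N W (cscale c F) G = c * ipW N W F G"
  by (simp add: ipW_def cscale_def sum_distrib_left mult_ac)

lemma ipW_cscale_right: "ipW N W F (cscale c G) = cnj c * ipW N W F G"
  by (simp add: ipW_def cscale_def sum_distrib_left mult_ac)

lemma ipW_zero_left: "ipW N W 0 G = 0"
  by (simp add: ipW_def)

lemma ipW_sum_left:
  "ipW N W (\<Sum>a\<in>A. cscale (c a) (F a)) G = (\<Sum>a\<in>A. c a * ipW N W (F a) G)"
  by (induction A rule: infinite_finite_induct)
    (simp_all only: sum.infinite sum.empty sum.insert not_False_eq_True
      ipW_zero_left ipW_add_left ipW_cscale_left)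

lemma ipW_conj_sym: "ipW N W G F = cnj (ipW N W F G)"
  by (simp add: ipW_def mult_ac)

lemma ipW_sum_right:
  "ipW N W F (\<Sum>a\<in>A. cscale (c a) (G a)) = (\<Sum>a\<in>A. cnj (c a) * ipW N W F (G a))"
  by (subst ipW_conj_sym) (simp add: ipW_sum_left ipW_conj_sym[of N W F])

section \<open>The operator \<open>I_W\<close> in closed form\<close>

definition orthonormal_rows :: "nat \<Rightarrow> cmat \<Rightarrow> bool" where
  "orthonormal_rows N W \<longleftrightarrow>
     (\<forall>l<N. \<forall>j<N. (\<Sum>k<N. W l k * cnj (W j k)) = (if l = j then 1 else 0))"

definition orthonormal_cols :: "nat \<Rightarrow> cmat \<Rightarrow> bool" where
  "orthonormal_cols N W \<longleftrightarrow>
     (\<forall>k<N. \<forall>m<N. (\<Sum>j<N. cnj (W j k) * W j m) = (if k = m then 1 else 0))"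

lemma unitary_mat_orthonormal_rows: "unitary_mat N W \<Longrightarrow> orthonormal_rows N W"
  unfolding unitary_mat_def orthonormal_rows_def
proof (intro allI impI)
  fix l j assume "W \<in> mspace N \<and> mmult N W (adj W) = ident N \<and> mmult N (adj W) W = ident N"
    and "l < N" "j < N"
  then have "mmult N W (adj W) l j = ident N l j" by simp
  with \<open>l < N\<close> \<open>j < N\<close> show "(\<Sum>k<N. W l k * cnj (W j k)) = (if l = j then 1 else 0)"
    by (simp add: mmult_def adj_def ident_def)
qed

lemma unitary_mat_orthonormal_cols: "unitary_mat N W \<Longrightarrow> orthonormal_cols N W"
  unfolding unitary_mat_def orthonormal_cols_def
proof (intro allI impI)
  fix k m assume "W \<in> mspace N \<and> mmult N W (adj W) = ident N \<and> mmult N (adj W) W = ident N"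
    and "k < N" "m < N"
  then have "mmult N (adj W) W k m = ident N k m" by simp
  with \<open>k < N\<close> \<open>m < N\<close> show "(\<Sum>j<N. cnj (W j k) * W j m) = (if k = m then 1 else 0)"
    by (simp add: mmult_def adj_def ident_def)
qed

text \<open>Since \<open>C_W G = (G \<circ> W) W\<^sup>*\<close> and \<open>W\<^sup>* W = 1\<close>, the solution of \<open>C_W G = D_W F\<close> is
  \<open>G = (D_W(F) W) \<oslash> W\<close> (entrywise quotient); this is its expanded form.\<close>

definition I_formula :: "nat \<Rightarrow> cmat \<Rightarrow> cmat \<Rightarrow> cmat" where
  "I_formula N W F = (\<lambda>i j. if i < N \<and> j < N then
     (\<Sum>k<N. \<Sum>l<N. F l k * cnj (W l k) * W i k * W l j) / W i j else 0)"

lemma I_formula_mspace: "I_formula N W F \<in> mspace N"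
  by (auto simp: I_formula_def mspace_def)

lemma C_op_I_formula:
  assumes rows: "orthonormal_rows N W" and nz: "no_zero_entries N W"
  shows "C_op N W (I_formula N W F) = D_op N W F"
proof (intro ext)
  fix i j
  show "C_op N W (I_formula N W F) i j = D_op N W F i j"
  proof (cases "i < N \<and> j < N")
    case False
    then show ?thesis by (auto simp: C_op_def D_op_def mmult_def)
  next
    case True
    have "C_op N W (I_formula N W F) i j = (\<Sum>k<N. I_formula N W F i k * W i k * cnj (W j k))"
      using True by (simp add: C_op_def mmult_def hadamard_def adj_def)
    also have "\<dots> = (\<Sum>k<N. (\<Sum>k'<N. \<Sum>l<N. F l k' * cnj (W l k') * W i k' * W l k) * cnj (W j k))"
      using True nz by (intro sum.cong refl) (simp add: I_formula_def no_zero_entries_def)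
    also have "\<dots> = (\<Sum>k'<N. \<Sum>l<N. F l k' * cnj (W l k') * W i k' * (\<Sum>k<N. W l k * cnj (W j k)))"
      by (simp only: sum_distrib_left sum_distrib_right mult.assoc)
        (subst sum.swap, rule sum.cong[OF refl], rule sum.swap)
    also have "\<dots> = (\<Sum>k'<N. \<Sum>l<N. F l k' * cnj (W l k') * W i k' * (if l = j then 1 else 0))"
      using rows True unfolding orthonormal_rows_def by (intro sum.cong refl) auto
    also have "\<dots> = (\<Sum>k'<N. F j k' * cnj (W j k') * W i k')"
      using True by (simp add: if_distrib cong: if_cong)
    also have "\<dots> = D_op N W F i j"
      using True by (simp add: D_op_def mmult_def hadamard_def adj_def mconj_def mult_ac)
    finally show ?thesis .
  qed
qed

lemma C_op_inj_on_mspace: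
  assumes cols: "orthonormal_cols N W" and nz: "no_zero_entries N W"
    and G: "G \<in> mspace N" and G': "G' \<in> mspace N" and eq: "C_op N W G = C_op N W G'"
  shows "G = G'"
proof (intro ext)
  fix i m
  show "G i m = G' i m"
  proof (cases "i < N \<and> m < N")
    case False
    then show ?thesis using G G' by (auto simp: mspace_def)
  next
    case True
    define H where "H k = (G i k - G' i k) * W i k" for k
    have H_perp: "(\<Sum>k<N. H k * cnj (W j k)) = 0" if "j < N" for j
    proof -
      have "C_op N W G i j = C_op N W G' i j" using eq by simp
      then show ?thesis
        using True that by (simp add: C_op_def mmult_def hadamard_def adj_def H_def
            algebra_simps sum_subtractf)
    qed
    have "H m = (\<Sum>k<N. H k * (if k = m then 1 else 0))"
      using True by (simp add: if_distrib cong: if_cong)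
    also have "\<dots> = (\<Sum>k<N. H k * (\<Sum>j<N. cnj (W j k) * W j m))"
      using cols True unfolding orthonormal_cols_def by (intro sum.cong refl) auto
    also have "\<dots> = (\<Sum>j<N. (\<Sum>k<N. H k * cnj (W j k)) * W j m)"
      by (simp add: sum_distrib_left sum_distrib_right mult_ac) (rule sum.swap)
    also have "\<dots> = 0"
      using H_perp by simp
    finally show ?thesis using nz True by (simp add: H_def no_zero_entries_def)
  qed
qed

lemma I_op_eq_I_formula:
  assumes "orthonormal_rows N W" "orthonormal_cols N W" "no_zero_entries N W"
  shows "I_op N W F = I_formula N W F"
  unfolding I_op_def
proof (rule the_equality)
  show "I_formula N W F \<in> mspace N \<and> C_op N W (I_formula N W F) = D_op N W F"
    using assms by (simp add: I_formula_mspace C_op_I_formula)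
next
  fix G assume "G \<in> mspace N \<and> C_op N W G = D_op N W F"
  then show "G = I_formula N W F"
    using assms C_op_inj_on_mspace[of N W G "I_formula N W F"]
    by (simp add: I_formula_mspace C_op_I_formula)
qed

lemma eigsp_eq_I_formula:
  assumes "orthonormal_rows N W" "orthonormal_cols N W" "no_zero_entries N W"
  shows "eigsp N W lam = {F \<in> mspace N. I_formula N W F = cscale lam F}"
  using I_op_eq_I_formula[OF assms] by (simp add: eigsp_def)

lemma I_formula_add: "I_formula N W (F + F') = I_formula N W F + I_formula N W F'"
  by (auto simp: I_formula_def fun_eq_iff algebra_simps sum.distrib add_divide_distrib)

lemma I_formula_cscale: "I_formula N W (cscale c F) = cscale c (I_formula N W F)"
  by (auto simp: I_formula_def cscale_def fun_eq_iff sum_distrib_left mult_ac)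

lemma I_formula_sum: "I_formula N W (\<Sum>a\<in>A. F a) = (\<Sum>a\<in>A. I_formula N W (F a))"
  by (induction A rule: infinite_finite_induct)
    (simp_all only: sum.infinite sum.empty sum.insert not_False_eq_True I_formula_add,
     simp_all add: I_formula_def fun_eq_iff)

lemma adj_mmult: "adj (mmult N A B) = mmult N (adj B) (adj A)"
  by (auto simp: adj_def mmult_def fun_eq_iff mult.commute)

lemma mconj_imaginary: "(\<And>i j. Re (Y i j) = 0) \<Longrightarrow> mconj Y = - Y"
  by (simp add: mconj_def fun_eq_iff complex_eq_iff)

lemma adj_C_op_imaginary:
  assumes "\<And>i j. Re (Y i j) = 0"
  shows "adj (C_op N W Y) = - D_op N W Y"
proof -
  have "adj (C_op N W Y) = mmult N W (adj (hadamard Y W))"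
    by (simp only: C_op_def adj_mmult) (simp add: adj_def)
  also have "\<dots> = - D_op N W Y"
    by (simp add: D_op_def mconj_imaginary[OF assms] hadamard_def adj_def mmult_def fun_eq_iff sum_negf)
  finally show ?thesis .
qed

lemma antihermitian_iff_eigsp_1:
  assumes rows: "orthonormal_rows N W" and cols: "orthonormal_cols N W" and nz: "no_zero_entries N W"
    and Y: "Y \<in> mspace N" and im: "\<And>i j. Re (Y i j) = 0"
  shows "adj (C_op N W Y) = - C_op N W Y \<longleftrightarrow> Y \<in> eigsp N W 1"
proof -
  have "adj (C_op N W Y) = - C_op N W Y \<longleftrightarrow> C_op N W Y = D_op N W Y"
    unfolding adj_C_op_imaginary[OF im] by (metis neg_equal_iff_equal)
  also have "\<dots> \<longleftrightarrow> C_op N W (I_formula N W Y) = C_op N W Y"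
    using C_op_I_formula[OF rows nz] by metis
  also have "\<dots> \<longleftrightarrow> I_formula N W Y = Y"
    using C_op_inj_on_mspace[OF cols nz I_formula_mspace[of N W Y] Y] by auto
  also have "\<dots> \<longleftrightarrow> Y \<in> eigsp N W 1"
    using Y by (simp add: eigsp_eq_I_formula[OF rows cols nz] cscale_def)
  finally show ?thesis .
qed

lemma hadamard_inj_on_mspace:
  assumes "no_zero_entries N W" "X \<in> mspace N" "Y \<in> mspace N" "hadamard X W = hadamard Y W"
  shows "X = Y"
proof (intro ext)
  fix i j
  show "X i j = Y i j"
  proof (cases "i < N \<and> j < N")
    case True
    have "X i j * W i j = Y i j * W i j"
      using assms(4) by (simp add: hadamard_def fun_eq_iff)
    then show ?thesis
      using True assms(1) by (simp add: no_zero_entries_def)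
  next
    case False
    then show ?thesis using assms(2,3) by (auto simp: mspace_def)
  qed
qed

lemma ipW_imaginary_real:
  assumes "\<And>i j. Re (Y i j) = 0" "\<And>i j. Re (Z i j) = 0"
  shows "ipW N W Y Z \<in> \<real>"
  unfolding complex_is_Real_iff ipW_def using assms by (simp add: Im_sum)

lemma hadamard_sum_cscale:
  "hadamard (\<Sum>a\<in>A. cscale (c a) (F a)) W = (\<Sum>a\<in>A. cscale (c a) (hadamard (F a) W))"
  by (simp add: hadamard_def cscale_def fun_eq_iff sum_apply2 sum_distrib_right mult.assoc)

section \<open>Kronecker products\<close>

lemma index_pair_less: "a < n \<Longrightarrow> b < m \<Longrightarrow> a * m + b < n * (m::nat)"
proof -
  assume "a < n" "b < m"
  then have "a * m + b < Suc a * m" by simp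
  also have "\<dots> \<le> n * m" using \<open>a < n\<close> by (intro mult_le_mono1) simp
  finally show ?thesis .
qed

lemma index_pair_cases:
  fixes i n m :: nat
  assumes "i < n * m"
  obtains a b where "a < n" "b < m" "i = a * m + b"
proof
  show "i div m < n" using assms by (simp add: less_mult_imp_div_less)
  show "i mod m < m" using assms by (cases m) auto
qed simp

lemma index_pair_eq_iff:
  fixes a b c d m :: nat
  assumes "b < m" "d < m"
  shows "a * m + b = c * m + d \<longleftrightarrow> a = c \<and> b = d"
proof
  assume eq: "a * m + b = c * m + d"
  have "a = (a * m + b) div m" "c = (c * m + d) div m" "b = (a * m + b) mod m" "d = (c * m + d) mod m"
    using assms by simp_all
  then show "a = c \<and> b = d"
    using eq by metis
qed simp

lemma kron_index:
  "a < n \<Longrightarrow> b < m \<Longrightarrow> c < n \<Longrightarrow> d < m \<Longrightarrow> kron n A m B (a*m+b) (c*m+d) = A a c * B b d"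
  by (simp add: kron_def index_pair_less)

lemma sum_sum_lessThan_mult_nat:
  fixes n m :: nat
  shows "(\<Sum>k<n*m. \<Sum>l<n*m. g k l) = (\<Sum>a<n. \<Sum>c<n. \<Sum>b<m. \<Sum>d<m. g (a*m+b) (c*m+d))"
  by (simp add: sum_lessThan_mult_nat) (rule sum.cong[OF refl], rule sum.swap)

lemma kron_cscale: "kron n (cscale c A) m (cscale d B) = cscale (c * d) (kron n A m B)"
  by (auto simp: kron_def cscale_def fun_eq_iff)

lemma mspace_kron_list: "kron_list As \<in> mspace (2 ^ length As)"
  by (cases As) (auto simp: mspace_def kron_def)

lemma no_zero_entries_kron:
  assumes "no_zero_entries n A" "no_zero_entries m B"
  shows "no_zero_entries (n*m) (kron n A m B)"
  unfolding no_zero_entries_def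
proof (intro allI impI)
  fix i j assume "i < n*m" "j < n*m"
  then obtain a b c d where "a < n" "b < m" "i = a*m+b" "c < n" "d < m" "j = c*m+d"
    by (metis index_pair_cases)
  then show "kron n A m B i j \<noteq> 0"
    using assms by (simp add: kron_index no_zero_entries_def)
qed

lemma orthonormal_rows_kron:
  assumes "orthonormal_rows n A" "orthonormal_rows m B"
  shows "orthonormal_rows (n*m) (kron n A m B)"
  unfolding orthonormal_rows_def
proof (intro allI impI)
  fix l j assume "l < n*m" "j < n*m"
  then obtain a b c d where ab: "a < n" "b < m" "l = a*m+b" and cd: "c < n" "d < m" "j = c*m+d"
    by (metis index_pair_cases)
  have "(\<Sum>k<n*m. kron n A m B l k * cnj (kron n A m B j k))
      = (\<Sum>a'<n. A a a' * cnj (A c a')) * (\<Sum>b'<m. B b b' * cnj (B d b'))"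
    unfolding sum_lessThan_mult_nat sum_product
    by (intro sum.cong refl) (simp add: ab cd kron_index mult_ac)
  also have "\<dots> = (if l = j then 1 else 0)"
    using assms ab cd unfolding orthonormal_rows_def by (simp add: index_pair_eq_iff)
  finally show "(\<Sum>k<n*m. kron n A m B l k * cnj (kron n A m B j k)) = (if l = j then 1 else 0)" .
qed

lemma orthonormal_cols_kron:
  assumes "orthonormal_cols n A" "orthonormal_cols m B"
  shows "orthonormal_cols (n*m) (kron n A m B)"
  unfolding orthonormal_cols_def
proof (intro allI impI)
  fix l j assume "l < n*m" "j < n*m"
  then obtain a b c d where ab: "a < n" "b < m" "l = a*m+b" and cd: "c < n" "d < m" "j = c*m+d"
    by (metis index_pair_cases)
  have "(\<Sum>k<n*m. cnj (kron n A m B k l) * kron n A m B k j)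
      = (\<Sum>a'<n. cnj (A a' a) * A a' c) * (\<Sum>b'<m. cnj (B b' b) * B b' d)"
    unfolding sum_lessThan_mult_nat sum_product
    by (intro sum.cong refl) (simp add: ab cd kron_index mult_ac)
  also have "\<dots> = (if l = j then 1 else 0)"
    using assms ab cd unfolding orthonormal_cols_def by (simp add: index_pair_eq_iff)
  finally show "(\<Sum>k<n*m. cnj (kron n A m B k l) * kron n A m B k j) = (if l = j then 1 else 0)" .
qed

lemma I_formula_kron:
  "I_formula (n*m) (kron n A m B) (kron n F m G) = kron n (I_formula n A F) m (I_formula m B G)"
proof (intro ext)
  fix i j
  show "I_formula (n*m) (kron n A m B) (kron n F m G) i j
      = kron n (I_formula n A F) m (I_formula m B G) i j"
  proof (cases "i < n*m \<and> j < n*m")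
    case False
    then show ?thesis by (auto simp: I_formula_def kron_def)
  next
    case True
    then obtain a b c d where ab: "a < n" "b < m" "i = a*m+b" and cd: "c < n" "d < m" "j = c*m+d"
      by (metis index_pair_cases)
    define X where "X a' c' = F c' a' * cnj (A c' a') * A a a' * A c' c" for a' c'
    define Y where "Y b' d' = G d' b' * cnj (B d' b') * B b b' * B d' d" for b' d'
    let ?K = "kron n A m B" and ?L = "kron n F m G"
    have "(\<Sum>k<n*m. \<Sum>l<n*m. ?L l k * cnj (?K l k) * ?K i k * ?K l j)
        = (\<Sum>a'<n. \<Sum>c'<n. X a' c') * (\<Sum>b'<m. \<Sum>d'<m. Y b' d')"
      unfolding sum_sum_lessThan_mult_nat sum_distrib_right unfolding sum_distrib_left
      by (intro sum.cong refl) (simp add: ab cd kron_index X_def Y_def mult_ac)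
    then show ?thesis
      using True ab cd by (simp add: I_formula_def kron_index X_def Y_def times_divide_times_eq)
  qed
qed

lemma ipW_kron:
  "ipW (n*m) (kron n A m B) (kron n F m G) (kron n F' m G') = ipW n A F F' * ipW m B G G'"
  unfolding ipW_def sum_sum_lessThan_mult_nat sum_distrib_right unfolding sum_distrib_left
  by (intro sum.cong refl) (simp add: kron_index norm_mult power_mult_distrib mult_ac)

section \<open>The two-by-two case\<close>

lemma sum_lessThan_2: "(\<Sum>k<(2::nat). f k) = f 0 + f 1"
  by (simp add: numeral_2_eq_2)

lemma unitary2_relations:
  assumes "unitary_mat 2 V"
  shows "V 0 0 * cnj (V 0 0) + V 0 1 * cnj (V 0 1) = 1"
    "V 0 0 * cnj (V 1 0) + V 0 1 * cnj (V 1 1) = 0"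
    "V 1 0 * cnj (V 0 0) + V 1 1 * cnj (V 0 1) = 0"
    "V 1 0 * cnj (V 1 0) + V 1 1 * cnj (V 1 1) = 1"
    "cnj (V 0 0) * V 0 0 + cnj (V 1 0) * V 1 0 = 1"
    "cnj (V 0 0) * V 0 1 + cnj (V 1 0) * V 1 1 = 0"
    "cnj (V 0 1) * V 0 0 + cnj (V 1 1) * V 1 0 = 0"
    "cnj (V 0 1) * V 0 1 + cnj (V 1 1) * V 1 1 = 1"
  using unitary_mat_orthonormal_rows[OF assms] unitary_mat_orthonormal_cols[OF assms]
  unfolding orthonormal_rows_def orthonormal_cols_def
  by (simp_all add: sum_lessThan_2)

lemma unitary2_cmod:
  assumes "unitary_mat 2 V" "no_zero_entries 2 V"
  shows "cmod (V 0 0) > 0" "cmod (V 0 1) > 0" "(cmod (V 0 0))\<^sup>2 + (cmod (V 0 1))\<^sup>2 = 1"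
    "cmod (V 1 0) = cmod (V 0 1)" "cmod (V 1 1) = cmod (V 0 0)"
proof -
  note rel = unitary2_relations[OF assms(1)]
  have sq: "complex_of_real ((cmod z)\<^sup>2) = z * cnj z" "complex_of_real ((cmod z)\<^sup>2) = cnj z * z" for z
    by (simp_all only: complex_norm_square mult.commute)
  show "cmod (V 0 0) > 0" "cmod (V 0 1) > 0"
    using assms(2) by (auto simp: no_zero_entries_def)
  have "complex_of_real ((cmod (V 0 0))\<^sup>2 + (cmod (V 0 1))\<^sup>2) = 1"
    using rel(1) by (simp only: of_real_add sq(1))
  then show row0: "(cmod (V 0 0))\<^sup>2 + (cmod (V 0 1))\<^sup>2 = 1"
    by (metis of_real_eq_1_iff)
  have "complex_of_real ((cmod (V 0 0))\<^sup>2 + (cmod (V 1 0))\<^sup>2) = 1"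
    using rel(5) by (simp only: of_real_add sq(2))
  then have "(cmod (V 0 0))\<^sup>2 + (cmod (V 1 0))\<^sup>2 = 1"
    by (metis of_real_eq_1_iff)
  with row0 have "(cmod (V 1 0))\<^sup>2 = (cmod (V 0 1))\<^sup>2"
    by linarith
  then show "cmod (V 1 0) = cmod (V 0 1)"
    by (simp add: power2_eq_iff_nonneg)
  have "complex_of_real ((cmod (V 0 1))\<^sup>2 + (cmod (V 1 1))\<^sup>2) = 1"
    using rel(8) by (simp only: of_real_add sq(2))
  then have "(cmod (V 0 1))\<^sup>2 + (cmod (V 1 1))\<^sup>2 = 1"
    by (metis of_real_eq_1_iff)
  with row0 have "(cmod (V 1 1))\<^sup>2 = (cmod (V 0 0))\<^sup>2"
    by linarith
  then show "cmod (V 1 1) = cmod (V 0 0)"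
    by (simp add: power2_eq_iff_nonneg)
qed

lemma mat2_eqI:
  assumes "F \<in> mspace 2" "F 0 0 = p" "F 0 1 = q" "F 1 0 = r" "F 1 1 = s"
  shows "F = mat2 p q r s"
proof (intro ext)
  fix i j
  show "F i j = mat2 p q r s i j"
    using assms by (cases "i < 2 \<and> j < 2") (auto simp: mat2_def mspace_def less_2_cases_iff)
qed

lemma I_formula_mat2:
  assumes "unitary_mat 2 V" "no_zero_entries 2 V"
  defines "p \<equiv> complex_of_real ((cmod (V 0 0))\<^sup>2)" and "q \<equiv> complex_of_real ((cmod (V 0 1))\<^sup>2)"
  shows "I_formula 2 V (mat2 g00 g01 g10 g11) =
    mat2 (p*g00 + q*g01 + q*g10 - q*g11) (p*g00 + q*g01 - p*g10 + p*g11)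
         (p*g00 - p*g01 + q*g10 + p*g11) (- q*g00 + q*g01 + q*g10 + p*g11)"
proof -
  note rel = unitary2_relations[OF assms(1)]
  have nz: "V 0 0 \<noteq> 0" "V 0 1 \<noteq> 0" "V 1 0 \<noteq> 0" "V 1 1 \<noteq> 0"
    using assms(2) unfolding no_zero_entries_def by auto
  have pq: "p = V 0 0 * cnj (V 0 0)" "q = V 0 1 * cnj (V 0 1)"
    by (simp_all only: p_def q_def complex_norm_square)
  show ?thesis
    unfolding pq using rel
    by (intro mat2_eqI I_formula_mspace;
        simp add: I_formula_def sum_lessThan_2 mat2_def divide_eq_eq nz nz[unfolded One_nat_def]; algebra)
qed

lemma mat2_eq_mat2_iff: "mat2 p q r s = mat2 p' q' r' s' \<longleftrightarrow> p = p' \<and> q = q' \<and> r = r' \<and> s = s'"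
proof
  assume eq: "mat2 p q r s = mat2 p' q' r' s'"
  have "mat2 p q r s i j = mat2 p' q' r' s' i j" for i j
    using eq by simp
  from this[of 0 0] this[of 0 1] this[of 1 0] this[of 1 1]
  show "p = p' \<and> q = q' \<and> r = r' \<and> s = s'"
    by (simp add: mat2_def)
qed simp

lemma cscale_mat2: "cscale c (mat2 p q r s) = mat2 (c * p) (c * q) (c * r) (c * s)"
  by (auto simp: cscale_def mat2_def fun_eq_iff)

lemma Gmat_eigen:
  assumes V: "unitary_mat 2 V" "no_zero_entries 2 V" and t: "t < 4"
  shows "I_formula 2 V (Gmat V t) = cscale (lamG t) (Gmat V t)"
proof -
  define p where "p = complex_of_real ((cmod (V 0 0))\<^sup>2)"
  define q where "q = complex_of_real ((cmod (V 0 1))\<^sup>2)"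
  note ab = unitary2_cmod[OF V]
  have pq: "p + q = 1" "p \<noteq> 0" "q \<noteq> 0"
    using ab(1-3) unfolding p_def q_def by (metis of_real_1 of_real_add, simp_all)
  have I: "I_formula 2 V (mat2 g00 g01 g10 g11) =
    mat2 (p*g00 + q*g01 + q*g10 - q*g11) (p*g00 + q*g01 - p*g10 + p*g11)
         (p*g00 - p*g01 + q*g10 + p*g11) (- q*g00 + q*g01 + q*g10 + p*g11)" for g00 g01 g10 g11
    unfolding p_def q_def by (rule I_formula_mat2[OF V])
  from t consider "t = 0" | "t = 1" | "t = 2" | "t = 3"
    by linarith
  then show ?thesis
  proof cases
    case 1
    then show ?thesis using pq
      by (simp add: Gmat_def I_formula_cscale I lamG_def mat2_eq_mat2_iff algebra_simps)
  next
    case 2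
    then show ?thesis using pq
      by (simp add: Gmat_def I_formula_cscale I lamG_def mat2_eq_mat2_iff algebra_simps)
  next
    case 3
    have "I_formula 2 V (mat2 q (- p) p (- q)) = mat2 q (- p) p (- q)"
      unfolding I mat2_eq_mat2_iff using pq(1) by (intro conjI; algebra)
    then show ?thesis
      using 3 by (simp add: Gmat_def Let_def I_formula_cscale lamG_def p_def q_def)
  next
    case 4
    have "I_formula 2 V (mat2 (1/p) (- (1/q)) (- (1/q)) (1/p))
        = cscale (-1) (mat2 (1/p) (- (1/q)) (- (1/q)) (1/p))"
      unfolding I mat2_eq_mat2_iff cscale_mat2 using pq by (simp add: field_simps; algebra)
    then show ?thesis
      using 4 by (simp add: Gmat_def Let_def I_formula_cscale lamG_def p_def q_def)
  qed
qed

definition real_mat2 :: "real \<Rightarrow> real \<Rightarrow> real \<Rightarrow> real \<Rightarrow> nat \<Rightarrow> nat \<Rightarrow> real" where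
  "real_mat2 p q r s = (\<lambda>i j. if i = 0 \<and> j = 0 then p else if i = 0 \<and> j = 1 then q
      else if i = 1 \<and> j = 0 then r else if i = 1 \<and> j = 1 then s else 0)"

definition Gmat_im :: "real \<Rightarrow> real \<Rightarrow> nat \<Rightarrow> nat \<Rightarrow> nat \<Rightarrow> real" where
  "Gmat_im a b t = (if t = 0 then real_mat2 1 1 0 0 else if t = 1 then real_mat2 0 0 1 1
     else if t = 2 then real_mat2 (b\<^sup>2 / (sqrt 2 * a * b)) (- a\<^sup>2 / (sqrt 2 * a * b))
       (a\<^sup>2 / (sqrt 2 * a * b)) (- b\<^sup>2 / (sqrt 2 * a * b))
     else real_mat2 (a * b / sqrt 2 / a\<^sup>2) (- (a * b / sqrt 2) / b\<^sup>2)
       (- (a * b / sqrt 2) / b\<^sup>2) (a * b / sqrt 2 / a\<^sup>2))"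

lemma Gmat_eq_imaginary:
  "Gmat V t = (\<lambda>i j. \<i> * complex_of_real (Gmat_im (cmod (V 0 0)) (cmod (V 0 1)) t i j))"
  by (auto simp: Gmat_def Gmat_im_def real_mat2_def mat2_def cscale_def Let_def fun_eq_iff)

lemma Gmat_imaginary: "- \<i> * Gmat V t i j \<in> \<real>"
  by (simp add: Gmat_eq_imaginary)

lemma Gmat_mspace: "Gmat V t \<in> mspace 2"
  by (auto simp: mspace_def Gmat_eq_imaginary Gmat_im_def real_mat2_def)

lemma ipW2_imaginary:
  "ipW 2 V (\<lambda>i j. \<i> * complex_of_real (r i j)) (\<lambda>i j. \<i> * complex_of_real (r' i j)) =
   complex_of_real ((cmod (V 0 0))\<^sup>2 * r 0 0 * r' 0 0 + (cmod (V 0 1))\<^sup>2 * r 0 1 * r' 0 1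
     + (cmod (V 1 0))\<^sup>2 * r 1 0 * r' 1 0 + (cmod (V 1 1))\<^sup>2 * r 1 1 * r' 1 1)"
  by (simp add: ipW_def sum_lessThan_2 algebra_simps)

lemma Gmat_orthonormal:
  assumes V: "unitary_mat 2 V" "no_zero_entries 2 V" and "t < 4" "t' < 4"
  shows "ipW 2 V (Gmat V t) (Gmat V t') = (if t = t' then 1 else 0)"
proof -
  define a b where "a = cmod (V 0 0)" and "b = cmod (V 0 1)"
  have ab: "a > 0" "b > 0" "a\<^sup>2 + b\<^sup>2 = 1"
    using unitary2_cmod[OF V] by (auto simp: a_def b_def)
  have "sqrt 2 * sqrt 2 = (2::real)"
    by simp
  moreover have "t \<in> {0,1,2,3}" "t' \<in> {0,1,2,3}"
    using \<open>t < 4\<close> \<open>t' < 4\<close> by auto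
  ultimately have "a\<^sup>2 * Gmat_im a b t 0 0 * Gmat_im a b t' 0 0
     + b\<^sup>2 * Gmat_im a b t 0 1 * Gmat_im a b t' 0 1
     + b\<^sup>2 * Gmat_im a b t 1 0 * Gmat_im a b t' 1 0 + a\<^sup>2 * Gmat_im a b t 1 1 * Gmat_im a b t' 1 1
     = (if t = t' then 1 else 0)"
    using ab by (auto simp: Gmat_im_def real_mat2_def field_simps power2_eq_square)
  then show ?thesis
    unfolding Gmat_eq_imaginary ipW2_imaginary using unitary2_cmod[OF V] by (simp add: a_def b_def)
qed

lemma Gmat_in_eigsp:
  assumes "unitary_mat 2 V" "no_zero_entries 2 V" "t < 4"
  shows "Gmat V t \<in> eigsp 2 V (lamG t)"
  using assms unitary_mat_orthonormal_rows unitary_mat_orthonormal_cols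
  by (simp add: eigsp_eq_I_formula Gmat_mspace Gmat_eigen)

section \<open>Products of the two-by-two eigenvectors\<close>

lemma kron_list_orthonormal_nonzero:
  assumes "\<forall>V\<in>set Vs. unitary_mat 2 V \<and> no_zero_entries 2 V"
  shows "orthonormal_rows (2 ^ length Vs) (kron_list Vs) \<and> orthonormal_cols (2 ^ length Vs) (kron_list Vs)
    \<and> no_zero_entries (2 ^ length Vs) (kron_list Vs)"
  using assms
proof (induction Vs)
  case Nil
  then show ?case by (simp add: orthonormal_rows_def orthonormal_cols_def no_zero_entries_def)
next
  case (Cons V Vs)
  then show ?case
    by (simp add: unitary_mat_orthonormal_rows unitary_mat_orthonormal_cols
        orthonormal_rows_kron orthonormal_cols_kron no_zero_entries_kron)
qed

lemma Gprod_Cons: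
  "length Vs = length s \<Longrightarrow> Gprod (V # Vs) (t # s) = kron 2 (Gmat V t) (2 ^ length Vs) (Gprod Vs s)"
  by (simp add: Gprod_def)

lemma Gprod_mspace: "length Vs = length s \<Longrightarrow> Gprod Vs s \<in> mspace (2 ^ length Vs)"
  using mspace_kron_list[of "map2 Gmat Vs s"] by (simp add: Gprod_def)

lemma I_formula_Gprod:
  assumes "length Vs = length s" "\<forall>V\<in>set Vs. unitary_mat 2 V \<and> no_zero_entries 2 V" "set s \<subseteq> {0..<4}"
  shows "I_formula (2 ^ length Vs) (kron_list Vs) (Gprod Vs s) = cscale (\<Prod>t\<leftarrow>s. lamG t) (Gprod Vs s)"
  using assms
proof (induction Vs s rule: list_induct2)
  case Nil
  then show ?case by (auto simp: I_formula_def Gprod_def cscale_def fun_eq_iff)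
next
  case (Cons V Vs t s)
  have "I_formula (2 ^ length (V # Vs)) (kron_list (V # Vs)) (Gprod (V # Vs) (t # s))
      = kron 2 (I_formula 2 V (Gmat V t)) (2 ^ length Vs)
          (I_formula (2 ^ length Vs) (kron_list Vs) (Gprod Vs s))"
    using Cons.hyps by (simp add: Gprod_Cons I_formula_kron[symmetric])
  also have "\<dots> = cscale (\<Prod>t\<leftarrow>t # s. lamG t) (Gprod (V # Vs) (t # s))"
    using Cons by (simp add: Gmat_eigen kron_cscale Gprod_Cons)
  finally show ?case .
qed

lemma ipW_Gprod:
  assumes "length Vs = length s" "length s = length s'"
    "\<forall>V\<in>set Vs. unitary_mat 2 V \<and> no_zero_entries 2 V" "set s \<subseteq> {0..<4}" "set s' \<subseteq> {0..<4}"
  shows "ipW (2 ^ length Vs) (kron_list Vs) (Gprod Vs s) (Gprod Vs s') = (if s = s' then 1 else 0)"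
  using assms
proof (induction Vs s s' rule: list_induct3)
  case Nil
  then show ?case by (simp add: Gprod_def ipW_def)
next
  case (Cons V Vs t s t' s')
  have "ipW (2 ^ length (V # Vs)) (kron_list (V # Vs)) (Gprod (V # Vs) (t # s)) (Gprod (V # Vs) (t' # s'))
     = ipW 2 V (Gmat V t) (Gmat V t') * ipW (2 ^ length Vs) (kron_list Vs) (Gprod Vs s) (Gprod Vs s')"
    using Cons.hyps by (simp add: Gprod_Cons ipW_kron[symmetric])
  also have "\<dots> = (if t # s = t' # s' then 1 else 0)"
    using Cons by (simp add: Gmat_orthonormal)
  finally show ?case .
qed

lemma kron_list_imaginary:
  assumes "\<forall>F\<in>set Fs. \<forall>i j. - \<i> * F i j \<in> \<real>"
  shows "(- \<i>) ^ length Fs * kron_list Fs i j \<in> \<real>"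
  using assms
proof (induction Fs arbitrary: i j)
  case (Cons F Fs)
  let ?n = "2 ^ length Fs"
  have "(- \<i>) ^ length (F # Fs) * kron_list (F # Fs) i j =
     (if i < 2 * ?n \<and> j < 2 * ?n then
       (- \<i> * F (i div ?n) (j div ?n)) * ((- \<i>) ^ length Fs * kron_list Fs (i mod ?n) (j mod ?n))
      else 0)"
    by (simp add: kron_def mult_ac)
  then show ?case
    using Cons by (simp add: Reals_mult)
qed simp

lemma Gprod_imaginary:
  assumes "length Vs = length s"
  shows "(- \<i>) ^ length Vs * Gprod Vs s i j \<in> \<real>"
proof -
  have "\<forall>F\<in>set (map2 Gmat Vs s). \<forall>i j. - \<i> * F i j \<in> \<real>"
    using Gmat_imaginary by auto
  then show ?thesis
    using kron_list_imaginary[of "map2 Gmat Vs s" i j] assms by (simp add: Gprod_def)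
qed

section \<open>Orthonormal bases of the matrix space\<close>

definition matrix_unit :: "nat \<Rightarrow> nat \<Rightarrow> cmat" where
  "matrix_unit a b = (\<lambda>i j. if i = a \<and> j = b then 1 else 0)"

lemma mspace_subset_span_matrix_units:
  "mspace N \<subseteq> cvs.span ((\<lambda>(a, b). matrix_unit a b) ` ({..<N} \<times> {..<N}))"
proof
  fix F assume F: "F \<in> mspace N"
  let ?E = "\<lambda>p. cscale (F (fst p) (snd p)) (matrix_unit (fst p) (snd p))"
  have "F = (\<Sum>p\<in>{..<N} \<times> {..<N}. ?E p)"
  proof (intro ext)
    fix i j
    show "F i j = (\<Sum>p\<in>{..<N} \<times> {..<N}. ?E p) i j"
    proof (cases "i < N \<and> j < N")
      case True
      have "(\<Sum>p\<in>{..<N} \<times> {..<N}. ?E p) i j = (\<Sum>p\<in>{..<N} \<times> {..<N}. if p = (i, j) then F i j else 0)"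
        unfolding sum_apply2 by (intro sum.cong refl) (auto simp: cscale_def matrix_unit_def)
      then show ?thesis using True by simp
    next
      case False
      then show ?thesis
        using F unfolding sum_apply2
        by (auto simp: mspace_def cscale_def matrix_unit_def intro!: sum.neutral)
    qed
  qed
  also have "\<dots> \<in> cvs.span ((\<lambda>(a, b). matrix_unit a b) ` ({..<N} \<times> {..<N}))"
    by (intro cvs.span_sum cvs.span_scale cvs.span_base) auto
  finally show "F \<in> cvs.span ((\<lambda>(a, b). matrix_unit a b) ` ({..<N} \<times> {..<N}))" .
qed

locale ipW_orthonormal_basis =
  fixes N :: nat and W :: cmat and S :: "'a set" and G :: "'a \<Rightarrow> cmat"
  assumes finite_index: "finite S"
    and card_index: "card S = N * N"
    and basis_mspace: "s \<in> S \<Longrightarrow> G s \<in> mspace N"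
    and orthonormal: "s \<in> S \<Longrightarrow> t \<in> S \<Longrightarrow> ipW N W (G s) (G t) = (if s = t then 1 else 0)"
begin

lemma ipW_combination:
  assumes "A \<subseteq> S" "t \<in> S"
  shows "ipW N W (\<Sum>s\<in>A. cscale (c s) (G s)) (G t) = (if t \<in> A then c t else 0)"
proof -
  have "finite A"
    using assms(1) finite_index finite_subset by blast
  have "ipW N W (\<Sum>s\<in>A. cscale (c s) (G s)) (G t) = (\<Sum>s\<in>A. c s * (if s = t then 1 else 0))"
    unfolding ipW_sum_left using assms by (intro sum.cong refl) (auto simp: orthonormal)
  also have "\<dots> = (if t \<in> A then c t else 0)"
    using \<open>finite A\<close> by (simp add: if_distrib[of "\<lambda>v. c _ * v"] cong: if_cong)
  finally show ?thesis .
qed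

lemma inj_on_basis: "inj_on G S"
proof (rule inj_onI)
  fix s t assume "s \<in> S" "t \<in> S" "G s = G t"
  then show "s = t"
    using orthonormal[of s s] orthonormal[of s t] by (simp split: if_splits)
qed

lemma independent_basis: "cvs.independent (G ` S)"
proof (rule cvs.independent_if_scalars_zero)
  show "finite (G ` S)"
    using finite_index by simp
next
  fix f v assume zero: "(\<Sum>v\<in>G ` S. cscale (f v) v) = 0" and "v \<in> G ` S"
  then obtain t where t: "t \<in> S" "v = G t" by auto
  have "(\<Sum>s\<in>S. cscale (f (G s)) (G s)) = 0"
    using zero inj_on_basis by (simp add: sum.reindex)
  then show "f v = 0"
    using ipW_combination[of S t "\<lambda>s. f (G s)"] t by (simp add: ipW_zero_left)
qed

text \<open>An orthonormal family of \<open>N\<^sup>2\<close> matrices cannot be enlarged by an independent vector, since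
  the \<open>N\<^sup>2\<close> matrix units already span the space.\<close>

lemma mspace_subset_span_basis: "mspace N \<subseteq> cvs.span (G ` S)"
proof
  fix F assume F: "F \<in> mspace N"
  show "F \<in> cvs.span (G ` S)"
  proof (rule ccontr)
    let ?E = "(\<lambda>(a, b). matrix_unit a b) ` ({..<N} \<times> {..<N})"
    assume F_out: "F \<notin> cvs.span (G ` S)"
    have "cvs.independent (insert F (G ` S))"
      using F_out independent_basis by (rule cvs.independent_insertI)
    moreover have "insert F (G ` S) \<subseteq> cvs.span ?E"
      using F basis_mspace mspace_subset_span_matrix_units by blast
    ultimately have "card (insert F (G ` S)) \<le> card ?E"
      using cvs.independent_span_bound[of ?E] by simp
    also have "\<dots> \<le> N * N"
      using card_image_le[of "{..<N} \<times> {..<N}"] by (simp add: card_cartesian_product)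
    finally have "card (insert F (G ` S)) \<le> N * N" .
    moreover have "F \<notin> G ` S"
      using F_out cvs.span_base by blast
    then have "card (insert F (G ` S)) = Suc (card S)"
      using finite_index inj_on_basis by (simp add: card_image)
    ultimately show False
      using card_index by simp
  qed
qed

lemma expansion:
  assumes "F \<in> mspace N"
  shows "F = (\<Sum>s\<in>S. cscale (ipW N W F (G s)) (G s))"
proof -
  obtain u where "F = (\<Sum>v\<in>G ` S. cscale (u v) v)"
    using mspace_subset_span_basis assms cvs.span_finite[of "G ` S"] finite_index by auto
  then have F: "F = (\<Sum>s\<in>S. cscale (u (G s)) (G s))"
    using inj_on_basis by (simp add: sum.reindex)
  then have "ipW N W F (G s) = u (G s)" if "s \<in> S" for s
    using ipW_combination[of S s "\<lambda>s. u (G s)"] that by simp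
  then show ?thesis
    using F by (metis (no_types, lifting) sum.cong)
qed

lemma eq_0_if_coefficients_0:
  assumes "F \<in> mspace N" "\<And>s. s \<in> S \<Longrightarrow> ipW N W F (G s) = 0"
  shows "F = 0"
proof -
  have "F = (\<Sum>s\<in>S. cscale (ipW N W F (G s)) (G s))"
    using expansion[OF assms(1)] .
  also have "\<dots> = 0"
    using assms(2) by (intro sum.neutral) (simp add: cscale_def zero_fun_def)
  finally show ?thesis .
qed

end

section \<open>Counting sign patterns\<close>

abbreviation count_minus :: "nat list \<Rightarrow> nat" where
  "count_minus s \<equiv> length (filter (\<lambda>t. lamG t = -1) s)"

abbreviation even_choices :: "nat \<Rightarrow> nat list set" where
  "even_choices x \<equiv> {s \<in> choices x. even (count_minus s)}"

abbreviation lamG_prod :: "nat list \<Rightarrow> complex" where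
  "lamG_prod s \<equiv> \<Prod>t\<leftarrow>s. lamG t"

lemma lamG_prod_eq_power: "lamG_prod s = (-1) ^ count_minus s"
  by (induction s) (auto simp: lamG_def)

lemma lamG_prod_cases: "lamG_prod s = 1 \<or> lamG_prod s = -1"
  unfolding lamG_prod_eq_power by (simp add: minus_one_power_iff)

lemma lamG_prod_eq_1_iff: "lamG_prod s = 1 \<longleftrightarrow> even (count_minus s)"
  unfolding lamG_prod_eq_power by (simp add: minus_one_power_iff)

lemma choices_eq: "choices x = {s. set s \<subseteq> {0..<4} \<and> length s = x}"
  by (auto simp: choices_def)

lemma finite_choices: "finite (choices x)"
  by (simp add: choices_eq finite_lists_length_eq)

lemma card_choices: "card (choices x) = 4 ^ x"
  by (simp add: choices_eq card_lists_length_eq)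

lemma card_choices_Suc:
  "card {s \<in> choices (Suc x). P s} = (\<Sum>t<4. card {s \<in> choices x. P (t # s)})"
proof -
  let ?A = "SIGMA t:{..<4::nat}. {s \<in> choices x. P (t # s)}"
  have "{s \<in> choices (Suc x). P s} = (\<lambda>(t, s). t # s) ` ?A"
    by (auto simp: choices_def image_iff length_Suc_conv)
  moreover have "inj_on (\<lambda>(t, s). t # s) ?A"
    by (auto simp: inj_on_def)
  ultimately have "card {s \<in> choices (Suc x). P s} = card ?A"
    by (simp add: card_image)
  also have "\<dots> = (\<Sum>t<4. card {s \<in> choices x. P (t # s)})"
    using finite_choices by (intro card_SigmaI) auto
  finally show ?thesis .
qed

lemma sum_lessThan_4: "(\<Sum>t<4::nat. f t) = f 0 + f 1 + f 2 + f 3"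
  by (simp add: numeral_eq_Suc lessThan_Suc add_ac)

lemma card_even_odd_choices:
  "card (even_choices x) = card {s \<in> choices x. odd (count_minus s)} + 2 ^ x
   \<and> card (even_choices x) + card {s \<in> choices x. odd (count_minus s)} = 4 ^ x"
proof (induction x)
  case 0
  have "even_choices 0 = {[]}" "{s \<in> choices 0. odd (count_minus s)} = {}"
    by (auto simp: choices_def)
  then show ?case by (simp only: card.empty) simp
next
  case (Suc x)
  have "card (even_choices (Suc x))
      = 3 * card (even_choices x) + card {s \<in> choices x. odd (count_minus s)}"
    "card {s \<in> choices (Suc x). odd (count_minus s)}
       = 3 * card {s \<in> choices x. odd (count_minus s)} + card (even_choices x)"
    unfolding card_choices_Suc sum_lessThan_4 by (simp_all add: lamG_def)
  then show ?case
    using Suc by simp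
qed

lemma card_even_choices: "card (even_choices x) = 2 ^ x * (2 ^ x + 1) div 2"
proof -
  have "2 * card (even_choices x) = 4 ^ x + 2 ^ x"
    using card_even_odd_choices[of x] by linarith
  also have "\<dots> = 2 ^ x * (2 ^ x + 1)"
    by (simp add: algebra_simps flip: power_mult_distrib)
  finally show ?thesis
    by simp
qed

section \<open>The spectral decomposition of \<open>I_U\<close>\<close>

locale kron_unitary =
  fixes Us :: "cmat list" and x N :: nat and U :: cmat
  assumes factors: "\<forall>V\<in>set Us. unitary_mat 2 V \<and> no_zero_entries 2 V"
    and length_Us: "length Us = x"
    and U_eq: "U = kron_list Us"
    and N_eq: "N = 2 ^ x"
begin

lemma U_orthonormal_nonzero: "orthonormal_rows N U" "orthonormal_cols N U" "no_zero_entries N U"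
  using kron_list_orthonormal_nonzero[OF factors] by (simp_all add: U_eq N_eq length_Us)

lemma U_mspace: "U \<in> mspace N"
  using mspace_kron_list[of Us] by (simp add: U_eq N_eq length_Us)

sublocale ipW_orthonormal_basis N U "choices x" "Gprod Us"
proof
  show "finite (choices x)"
    by (rule finite_choices)
  show "card (choices x) = N * N"
    by (simp add: card_choices N_eq flip: power_mult_distrib)
  show "Gprod Us s \<in> mspace N" if "s \<in> choices x" for s
    using Gprod_mspace[of Us s] that by (simp add: choices_def N_eq length_Us)
  show "ipW N U (Gprod Us s) (Gprod Us t) = (if s = t then 1 else 0)"
    if "s \<in> choices x" "t \<in> choices x" for s t
    using ipW_Gprod[of Us s t] factors that by (simp add: choices_def N_eq U_eq length_Us)
qed

lemma I_formula_Gprod_U: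
  "s \<in> choices x \<Longrightarrow> I_formula N U (Gprod Us s) = cscale (lamG_prod s) (Gprod Us s)"
  using I_formula_Gprod[of Us s] factors by (simp add: choices_def N_eq U_eq length_Us)

lemma ipW_I_formula:
  assumes "F \<in> mspace N" "t \<in> choices x"
  shows "ipW N U (I_formula N U F) (Gprod Us t) = lamG_prod t * ipW N U F (Gprod Us t)"
proof -
  have "I_formula N U F = (\<Sum>s\<in>choices x. I_formula N U (cscale (ipW N U F (Gprod Us s)) (Gprod Us s)))"
    by (subst expansion[OF assms(1)]) (rule I_formula_sum)
  also have "\<dots> = (\<Sum>s\<in>choices x. cscale (ipW N U F (Gprod Us s) * lamG_prod s) (Gprod Us s))"
    by (intro sum.cong refl) (simp add: I_formula_cscale I_formula_Gprod_U cvs.scale_scale)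
  finally show ?thesis
    using ipW_combination[of "choices x" t] assms(2) by (simp add: mult.commute)
qed

lemma eigsp_iff_coefficients:
  "F \<in> eigsp N U \<mu> \<longleftrightarrow>
     F \<in> mspace N \<and> (\<forall>t\<in>choices x. lamG_prod t \<noteq> \<mu> \<longrightarrow> ipW N U F (Gprod Us t) = 0)"
proof -
  have "I_formula N U F = cscale \<mu> F \<longleftrightarrow> (\<forall>t\<in>choices x. lamG_prod t \<noteq> \<mu> \<longrightarrow> ipW N U F (Gprod Us t) = 0)"
    if F: "F \<in> mspace N"
  proof -
    have coeff: "ipW N U (I_formula N U F - cscale \<mu> F) (Gprod Us t)
        = (lamG_prod t - \<mu>) * ipW N U F (Gprod Us t)"
      if "t \<in> choices x" for t
      using ipW_I_formula[OF F that] by (simp add: ipW_diff_left ipW_cscale_left algebra_simps)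
    have diff_mspace: "I_formula N U F - cscale \<mu> F \<in> mspace N"
      using F subspace_mspace I_formula_mspace by (simp add: cvs.subspace_diff cvs.subspace_scale)
    have "I_formula N U F = cscale \<mu> F \<longleftrightarrow> I_formula N U F - cscale \<mu> F = 0"
      by simp
    also have "\<dots> \<longleftrightarrow> (\<forall>t\<in>choices x. ipW N U (I_formula N U F - cscale \<mu> F) (Gprod Us t) = 0)"
      using eq_0_if_coefficients_0[OF diff_mspace] by (auto simp: ipW_zero_left)
    also have "\<dots> \<longleftrightarrow> (\<forall>t\<in>choices x. lamG_prod t \<noteq> \<mu> \<longrightarrow> ipW N U F (Gprod Us t) = 0)"
      using coeff by auto
    finally show ?thesis .
  qed
  then show ?thesis
    using U_orthonormal_nonzero by (auto simp: eigsp_eq_I_formula)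
qed

lemma Gprod_in_eigsp: "s \<in> choices x \<Longrightarrow> Gprod Us s \<in> eigsp N U (lamG_prod s)"
  using basis_mspace orthonormal by (auto simp: eigsp_iff_coefficients)

lemma Gprod_nonzero: "s \<in> choices x \<Longrightarrow> Gprod Us s \<noteq> 0"
  using orthonormal[of s s] by (auto simp: ipW_zero_left)

lemma subspace_eigsp: "cvs.subspace (eigsp N U \<mu>)"
  using subspace_mspace unfolding cvs.subspace_def
  by (simp add: eigsp_iff_coefficients ipW_zero_left ipW_add_left ipW_cscale_left)

lemma combination_in_eigsp:
  assumes "A \<subseteq> choices x" "\<And>s. s \<in> A \<Longrightarrow> lamG_prod s = \<mu>"
  shows "(\<Sum>s\<in>A. cscale (c s) (Gprod Us s)) \<in> eigsp N U \<mu>"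
  using assms Gprod_in_eigsp
  by (intro cvs.subspace_sum[OF subspace_eigsp] cvs.subspace_scale[OF subspace_eigsp]) auto

lemma eigenvalue_cases:
  assumes "F \<in> mspace N" "F \<noteq> 0" "I_op N U F = cscale \<mu> F"
  shows "\<mu> = 1 \<or> \<mu> = -1"
proof -
  obtain t where t: "t \<in> choices x" "ipW N U F (Gprod Us t) \<noteq> 0"
    using eq_0_if_coefficients_0 assms(1,2) by blast
  have "F \<in> eigsp N U \<mu>"
    using assms by (simp add: eigsp_def)
  then have "lamG_prod t = \<mu>"
    using t by (auto simp: eigsp_iff_coefficients)
  then show ?thesis
    using lamG_prod_cases[of t] by auto
qed

lemma eigsp_1_nontrivial: "eigsp N U 1 \<noteq> {0}"
proof -
  have s: "replicate x 0 \<in> choices x"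
    by (auto simp: choices_def)
  moreover have "lamG_prod (replicate x 0) = 1"
    by (simp add: lamG_def)
  ultimately show ?thesis
    using Gprod_in_eigsp[OF s] Gprod_nonzero[OF s] by auto
qed

lemma eigsp_minus_1_nontrivial:
  assumes "x \<ge> 1"
  shows "eigsp N U (-1) \<noteq> {0}"
proof -
  have s: "3 # replicate (x - 1) 0 \<in> choices x"
    using assms by (auto simp: choices_def)
  moreover have "lamG_prod (3 # replicate (x - 1) 0) = -1"
    by (simp add: lamG_def)
  ultimately show ?thesis
    using Gprod_in_eigsp[OF s] Gprod_nonzero[OF s] by auto
qed

lemma eigsp_decomposition:
  assumes F: "F \<in> mspace N"
  shows "\<exists>!p. fst p \<in> eigsp N U 1 \<and> snd p \<in> eigsp N U (-1) \<and> F = fst p + snd p"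
proof -
  define c where "c s = ipW N U F (Gprod Us s)" for s
  define S1 where "S1 = {s \<in> choices x. lamG_prod s = 1}"
  define S2 where "S2 = {s \<in> choices x. lamG_prod s \<noteq> 1}"
  define A where "A = (\<Sum>s\<in>S1. cscale (c s) (Gprod Us s))"
  define B where "B = (\<Sum>s\<in>S2. cscale (c s) (Gprod Us s))"
  have A: "A \<in> eigsp N U 1"
    unfolding A_def by (rule combination_in_eigsp) (auto simp: S1_def)
  have B: "B \<in> eigsp N U (-1)"
    unfolding B_def by (rule combination_in_eigsp) (use lamG_prod_cases in \<open>auto simp: S2_def\<close>)
  have "F = (\<Sum>s\<in>choices x. cscale (c s) (Gprod Us s))"
    using expansion[OF F] by (simp add: c_def)
  also have "\<dots> = A + B"
  proof -
    have "choices x = S1 \<union> S2" "S1 \<inter> S2 = {}" "finite S1" "finite S2"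
      using finite_choices by (auto simp: S1_def S2_def)
    then show ?thesis
      unfolding A_def B_def by (simp add: sum.union_disjoint)
  qed
  finally have F_eq: "F = A + B" .
  show ?thesis
  proof (rule ex1I[of _ "(A, B)"])
    fix p assume p: "fst p \<in> eigsp N U 1 \<and> snd p \<in> eigsp N U (-1) \<and> F = fst p + snd p"
    have diff_eq: "A - fst p = snd p - B"
      using p F_eq by (simp add: algebra_simps)
    have "A - fst p = 0"
    proof (rule eq_0_if_coefficients_0)
      show "A - fst p \<in> mspace N"
        using A p subspace_mspace by (auto simp: eigsp_iff_coefficients intro: cvs.subspace_diff)
      fix t assume t: "t \<in> choices x"
      show "ipW N U (A - fst p) (Gprod Us t) = 0"
      proof (cases "lamG_prod t = 1")
        case True
        then show ?thesis
          using B p t unfolding diff_eq by (simp add: eigsp_iff_coefficients ipW_diff_left)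
      next
        case False
        then show ?thesis
          using A p t by (simp add: eigsp_iff_coefficients ipW_diff_left)
      qed
    qed
    then show "p = (A, B)"
      using diff_eq by (simp add: prod_eq_iff)
  qed (use A B F_eq in simp)
qed

lemma eigsp_orthogonal:
  assumes A: "A \<in> eigsp N U 1" and B: "B \<in> eigsp N U (-1)"
  shows "ipW N U A B = 0"
proof -
  have B_mspace: "B \<in> mspace N"
    using B by (simp add: eigsp_iff_coefficients)
  have "ipW N U A B = (\<Sum>s\<in>choices x. cnj (ipW N U B (Gprod Us s)) * ipW N U A (Gprod Us s))"
    by (subst expansion[OF B_mspace]) (rule ipW_sum_right)
  also have "\<dots> = 0"
  proof (intro sum.neutral ballI)
    fix s assume "s \<in> choices x"
    then show "cnj (ipW N U B (Gprod Us s)) * ipW N U A (Gprod Us s) = 0"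
      using A B lamG_prod_cases[of s] by (auto simp: eigsp_iff_coefficients)
  qed
  finally show ?thesis .
qed

lemma even_choices_eq: "even_choices x = {s \<in> choices x. lamG_prod s = 1}"
  by (simp add: lamG_prod_eq_1_iff)

lemma expansion_eigsp_1:
  assumes "F \<in> eigsp N U 1"
  shows "F = (\<Sum>s\<in>even_choices x. cscale (ipW N U F (Gprod Us s)) (Gprod Us s))"
proof -
  have "F = (\<Sum>s\<in>choices x. cscale (ipW N U F (Gprod Us s)) (Gprod Us s))"
    using assms by (simp add: eigsp_iff_coefficients flip: expansion)
  also have "\<dots> = (\<Sum>s\<in>even_choices x. cscale (ipW N U F (Gprod Us s)) (Gprod Us s))"
    using assms finite_choices
    by (intro sum.mono_neutral_right)
      (auto simp: even_choices_eq eigsp_iff_coefficients cscale_def zero_fun_def)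
  finally show ?thesis .
qed

lemma dim_eigsp_1: "cvs.dim (eigsp N U 1) = card (even_choices x)"
proof (rule cvs.dim_unique[of "Gprod Us ` even_choices x"])
  show "Gprod Us ` even_choices x \<subseteq> eigsp N U 1"
    by (auto simp: even_choices_eq) (metis Gprod_in_eigsp)
  show "eigsp N U 1 \<subseteq> cvs.span (Gprod Us ` even_choices x)"
  proof
    fix F assume "F \<in> eigsp N U 1"
    then have "F = (\<Sum>s\<in>even_choices x. cscale (ipW N U F (Gprod Us s)) (Gprod Us s))"
      by (rule expansion_eigsp_1)
    also have "\<dots> \<in> cvs.span (Gprod Us ` even_choices x)"
      by (intro cvs.span_sum cvs.span_scale cvs.span_base) auto
    finally show "F \<in> cvs.span (Gprod Us ` even_choices x)" .
  qed
  show "cvs.independent (Gprod Us ` even_choices x)"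
    by (rule cvs.independent_mono[OF independent_basis]) auto
  show "card (Gprod Us ` even_choices x) = card (even_choices x)"
    by (rule card_image[OF inj_on_subset[OF inj_on_basis]]) auto
qed


definition imag_phase :: complex where
  "imag_phase = \<i> * (- \<i>) ^ x"

text \<open>Each \<open>Gprod Us s\<close> is \<open>\<i>\<^sup>x\<close> times a real matrix; multiplying by \<open>imag_phase\<close> makes it purely
  imaginary, as required by the definition of \<open>Dset\<close>.\<close>

definition imag_basis :: "nat list \<Rightarrow> cmat" where
  "imag_basis s = cscale imag_phase (Gprod Us s)"

lemma imag_phase_unimodular: "imag_phase * cnj imag_phase = 1"
proof -
  have "cmod imag_phase = 1"
    by (simp add: imag_phase_def norm_mult norm_power)
  then show ?thesis
    using complex_norm_square[of imag_phase] by simp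
qed

lemma imag_basis_imaginary:
  assumes "s \<in> choices x"
  shows "Re (imag_basis s i j) = 0"
proof -
  have "(- \<i>) ^ x * Gprod Us s i j \<in> \<real>"
    using Gprod_imaginary[of Us s i j] assms by (simp add: choices_def length_Us)
  then obtain r where "(- \<i>) ^ x * Gprod Us s i j = complex_of_real r"
    by (auto elim: Reals_cases)
  then have "imag_basis s i j = \<i> * complex_of_real r"
    by (simp add: imag_basis_def imag_phase_def cscale_def mult.assoc)
  then show ?thesis
    by simp
qed

lemma imag_basis_mspace: "s \<in> choices x \<Longrightarrow> imag_basis s \<in> mspace N"
  using subspace_mspace basis_mspace by (simp add: imag_basis_def cvs.subspace_scale)

lemma imag_basis_orthonormal:
  assumes "s \<in> choices x" "t \<in> choices x"
  shows "ipW N U (imag_basis s) (imag_basis t) = (if s = t then 1 else 0)"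
proof -
  have "ipW N U (imag_basis s) (imag_basis t)
      = imag_phase * cnj imag_phase * ipW N U (Gprod Us s) (Gprod Us t)"
    by (simp add: imag_basis_def ipW_cscale_left ipW_cscale_right mult.assoc)
  then show ?thesis
    using assms by (simp add: imag_phase_unimodular orthonormal)
qed

lemma imag_basis_in_eigsp_1: "s \<in> even_choices x \<Longrightarrow> imag_basis s \<in> eigsp N U 1"
  using Gprod_in_eigsp[of s] cvs.subspace_scale[OF subspace_eigsp]
  by (simp add: imag_basis_def even_choices_eq)

lemma expansion_imag_basis:
  assumes "F \<in> eigsp N U 1"
  shows "F = (\<Sum>s\<in>even_choices x. cscale (ipW N U F (imag_basis s)) (imag_basis s))"
proof -
  have "cscale (ipW N U F (imag_basis s)) (imag_basis s)
      = cscale (imag_phase * cnj imag_phase * ipW N U F (Gprod Us s)) (Gprod Us s)" for s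
    by (simp add: imag_basis_def ipW_cscale_right cvs.scale_scale mult_ac)
  then show ?thesis
    using expansion_eigsp_1[OF assms] by (simp add: imag_phase_unimodular)
qed

abbreviation Dbasis :: "nat list \<Rightarrow> cmat" where
  "Dbasis s \<equiv> hadamard (imag_basis s) U"

lemma inj_on_Dbasis: "inj_on Dbasis (even_choices x)"
proof (rule inj_onI)
  fix s t assume s: "s \<in> even_choices x" and t: "t \<in> even_choices x" and "Dbasis s = Dbasis t"
  then have "imag_basis s = imag_basis t"
    using hadamard_inj_on_mspace U_orthonormal_nonzero(3) imag_basis_mspace by auto
  then show "s = t"
    using imag_basis_orthonormal[of s t] imag_basis_orthonormal[of t t] s t by (simp split: if_splits)
qed

lemma Dbasis_in_Dset: "s \<in> even_choices x \<Longrightarrow> Dbasis s \<in> Dset N U"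
proof -
  assume s: "s \<in> even_choices x"
  then have "s \<in> choices x"
    by simp
  have imag: "(\<lambda>i j. \<i> * complex_of_real (Im (imag_basis s i j))) = imag_basis s"
    using imag_basis_imaginary[OF \<open>s \<in> choices x\<close>] by (simp add: fun_eq_iff complex_eq_iff)
  have "adj (C_op N U (imag_basis s)) = - C_op N U (imag_basis s)"
    using antihermitian_iff_eigsp_1[OF U_orthonormal_nonzero imag_basis_mspace imag_basis_imaginary]
      imag_basis_in_eigsp_1 s \<open>s \<in> choices x\<close> by blast
  then show "Dbasis s \<in> Dset N U"
    unfolding Dset_def
    by (intro CollectI exI[of _ "\<lambda>i j. Im (imag_basis s i j)"]) (simp add: imag C_op_def)
qed

lemma Dset_subset_span_Dbasis: "Dset N U \<subseteq> rvs.span (Dbasis ` even_choices x)"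
proof
  fix X assume "X \<in> Dset N U"
  then obtain R where X: "X = hadamard (\<lambda>i j. \<i> * complex_of_real (R i j)) U"
    and antiherm: "adj (mmult N X (adj U)) = - mmult N X (adj U)"
    unfolding Dset_def by blast
  define Y where "Y = (\<lambda>i j. if i < N \<and> j < N then \<i> * complex_of_real (R i j) else 0)"
  have Y: "Y \<in> mspace N" "\<And>i j. Re (Y i j) = 0"
    by (simp_all add: Y_def mspace_def)
  have X_eq: "X = hadamard Y U"
    using U_mspace by (auto simp: X Y_def hadamard_def mspace_def fun_eq_iff)
  have "Y \<in> eigsp N U 1"
    using antihermitian_iff_eigsp_1[OF U_orthonormal_nonzero Y] antiherm
    by (simp add: X_eq C_op_def)
  then have "X = (\<Sum>s\<in>even_choices x. cscale (ipW N U Y (imag_basis s)) (Dbasis s))"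
    unfolding X_eq by (subst expansion_imag_basis) (simp_all add: hadamard_sum_cscale)
  also have "\<dots> = (\<Sum>s\<in>even_choices x. rscale (Re (ipW N U Y (imag_basis s))) (Dbasis s))"
    using ipW_imaginary_real[OF Y(2) imag_basis_imaginary]
    by (intro sum.cong refl) (simp add: rscale_eq_cscale complex_is_Real_iff complex_eq_iff)
  also have "\<dots> \<in> rvs.span (Dbasis ` even_choices x)"
    by (intro rvs.span_sum rvs.span_scale rvs.span_base) auto
  finally show "X \<in> rvs.span (Dbasis ` even_choices x)" .
qed

lemma independent_Dbasis: "rvs.independent (Dbasis ` even_choices x)"
proof (rule rvs.independent_if_scalars_zero)
  show "finite (Dbasis ` even_choices x)"
    using finite_choices by simp
next
  fix f v assume zero: "(\<Sum>v\<in>Dbasis ` even_choices x. rscale (f v) v) = 0"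
    and "v \<in> Dbasis ` even_choices x"
  then obtain t where t: "t \<in> even_choices x" "v = Dbasis t"
    by auto
  define Z where "Z = (\<Sum>s\<in>even_choices x. cscale (complex_of_real (f (Dbasis s))) (imag_basis s))"
  have "hadamard Z U = hadamard 0 U"
    using zero inj_on_Dbasis
    by (simp add: Z_def hadamard_sum_cscale sum.reindex rscale_eq_cscale)
      (simp add: hadamard_def zero_fun_def)
  moreover have "Z \<in> mspace N"
    unfolding Z_def using imag_basis_mspace
    by (intro cvs.subspace_sum[OF subspace_mspace] cvs.subspace_scale[OF subspace_mspace]) auto
  ultimately have "Z = 0"
    using hadamard_inj_on_mspace[OF U_orthonormal_nonzero(3)] cvs.subspace_0[OF subspace_mspace] by blast
  moreover have "ipW N U Z (imag_basis t) = complex_of_real (f v)"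
  proof -
    have "ipW N U Z (imag_basis t)
        = (\<Sum>s\<in>even_choices x. complex_of_real (f (Dbasis s)) * (if s = t then 1 else 0))"
      unfolding Z_def ipW_sum_left using t by (intro sum.cong refl) (simp add: imag_basis_orthonormal)
    also have "\<dots> = complex_of_real (f v)"
      using finite_choices t by (simp add: if_distrib cong: if_cong)
    finally show ?thesis .
  qed
  ultimately show "f v = 0"
    by (simp add: ipW_zero_left)
qed

lemma Dnum_eq_card_even_choices: "Dnum N U = card (even_choices x)"
  unfolding Dnum_def
proof (rule rvs.dim_unique[OF _ Dset_subset_span_Dbasis independent_Dbasis])
  show "Dbasis ` even_choices x \<subseteq> Dset N U"
    using Dbasis_in_Dset by blast
  show "card (Dbasis ` even_choices x) = card (even_choices x)"
    using inj_on_Dbasis by (rule card_image)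
qed

end

theorem corollary3p17:
  fixes Us :: "cmat list" and x N :: nat and U :: cmat
  assumes "x \<ge> 1" and "length Us = x"
    and "\<forall>V \<in> set Us. unitary_mat 2 V \<and> no_zero_entries 2 V"
    and "U = kron_list Us" and "N = 2 ^ x"
  shows
    "(\<forall>lam F. F \<in> mspace N \<and> F \<noteq> 0 \<and> I_op N U F = cscale lam F \<longrightarrow> lam = 1 \<or> lam = -1)
     \<and> eigsp N U 1 \<noteq> {0} \<and> eigsp N U (-1) \<noteq> {0}
     \<and> (\<forall>F \<in> mspace N. \<exists>!p. fst p \<in> eigsp N U 1 \<and> snd p \<in> eigsp N U (-1) \<and> F = fst p + snd p)
     \<and> (\<forall>A \<in> eigsp N U 1. \<forall>B \<in> eigsp N U (-1). ipW N U A B = 0)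
     \<and> (\<forall>k<x. \<forall>t<4. Gmat (Us ! k) t \<in> eigsp 2 (Us ! k) (lamG t))
     \<and> (\<forall>s \<in> choices x. Gprod Us s \<in> eigsp N U (\<Prod>t\<leftarrow>s. lamG t))
     \<and> (\<forall>s \<in> choices x. \<forall>s' \<in> choices x.
          ipW N U (Gprod Us s) (Gprod Us s') = (if s = s' then 1 else 0))
     \<and> (\<forall>F \<in> mspace N. \<exists>c. F = (\<Sum>s \<in> choices x. cscale (c s) (Gprod Us s)))
     \<and> vector_space.dim cscale (eigsp N U 1)
         = card {s \<in> choices x. even (length (filter (\<lambda>t. lamG t = -1) s))}
     \<and> card {s \<in> choices x. even (length (filter (\<lambda>t. lamG t = -1) s))} = 2 ^ x * (2 ^ x + 1) div 2
     \<and> Dnum N U = vector_space.dim cscale (eigsp N U 1)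
     \<and> Dnum N U = 2 ^ x * (2 ^ x + 1) div 2"
proof -
  interpret kron_unitary Us x N U
    using assms(2-5) by unfold_locales
  have factor_eigen: "\<forall>k<x. \<forall>t<4. Gmat (Us ! k) t \<in> eigsp 2 (Us ! k) (lamG t)"
    using assms(2,3) by (auto intro: Gmat_in_eigsp)
  have coordinates: "\<forall>F \<in> mspace N. \<exists>c. F = (\<Sum>s \<in> choices x. cscale (c s) (Gprod Us s))"
    using expansion by (blast intro: exI[of _ "\<lambda>s. ipW N U _ (Gprod Us s)"])
  show ?thesis
    using eigenvalue_cases eigsp_1_nontrivial eigsp_minus_1_nontrivial[OF assms(1)]
      eigsp_decomposition eigsp_orthogonal factor_eigen Gprod_in_eigsp orthonormal coordinates
      dim_eigsp_1 card_even_choices[of x] Dnum_eq_card_even_choices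
    by auto
qed

end
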